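(* Let $1<n\leq\infty$. Then there is $g\in L_\infty(\Omega_n)$ with $\mathrm{Diam}(g(\Omega_n))=1$ and $\widetilde\Lambda_n=\sup_{z\in\mathbb{C}}\frac{1}{\|g-z\|_1}$.
   Context: For $n\in\mathbb{N}$, $(\Omega_n,\mu_n)$ is $\{1,\dots,n\}$ with normalized counting measure; $(\Omega_\infty,\mu_\infty)$ is $[0,1]$ with Lebesgue measure; $\|\cdot\|_1$ is the $L_1(\Omega_n,\mu_n)$-norm; $\mathrm{Diam}(A)=\sup_{z,w\in A}|z-w|$. For $n>1$: $\widetilde\Lambda_n=2$ if $n\in\{2,4\}$; $\widetilde\Lambda_n=\sqrt3$ if $n=3k$ ($k\in\mathbb{N}$) or $n=\infty$; $\widetilde\Lambda_n=\frac{2\sqrt3}{\sqrt{\frac{3k-3}{3k+1}}+\frac{3k+3}{3k+1}}$ if $n=3k+1\neq4$; $\widetilde\Lambda_n=\frac{2\sqrt3}{\sqrt{\frac{3k+6}{3k+2}}+\frac{3k}{3k+2}}$ if $n=3k+2$ ($k\in\mathbb{N}$). *)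

theory Defs
  imports "HOL-Analysis.Analysis" "HOL-Library.Extended_Nat"
begin

definition Omega_mu :: "enat \<Rightarrow> real measure" where
  "Omega_mu n = (case n of
      enat m \<Rightarrow> uniform_count_measure (real ` {1..m})
    | \<infinity> \<Rightarrow> restrict_space lborel {0..1})"

definition Linfty :: "real measure \<Rightarrow> (real \<Rightarrow> complex) set" where
  "Linfty M = {g. g \<in> borel_measurable M \<and> (\<exists>C. AE x in M. cmod (g x) \<le> C)}"

text \<open>The image g(Omega) of an L_infinity class, i.e. the essential range
  (for finite n this is the ordinary range, every point having positive mass).\<close>
definition ess_range :: "real measure \<Rightarrow> (real \<Rightarrow> complex) \<Rightarrow> complex set" where
  "ess_range M g = {y. \<forall>e>0. emeasure M {x \<in> space M. dist (g x) y < e} \<noteq> 0}"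

definition L1norm :: "real measure \<Rightarrow> (real \<Rightarrow> complex) \<Rightarrow> real" where
  "L1norm M f = (\<integral>x. cmod (f x) \<partial>M)"

definition Lambda_tilde :: "enat \<Rightarrow> real" where
  "Lambda_tilde n = (case n of
      \<infinity> \<Rightarrow> sqrt 3
    | enat m \<Rightarrow>
        (if m = 2 \<or> m = 4 then 2
         else if m mod 3 = 0 then sqrt 3
         else if m mod 3 = 1 then
           (let k = real ((m - 1) div 3) in
             2 * sqrt 3 / (sqrt ((3*k - 3) / (3*k + 1)) + (3*k + 3) / (3*k + 1)))
         else
           (let k = real ((m - 2) div 3) in
             2 * sqrt 3 / (sqrt ((3*k + 6) / (3*k + 2)) + (3*k) / (3*k + 2)))))"

end

theory Submission
  imports Defs
begin

(* The witnesses are step functions g with values P, Q, R (a set of diameter 1) taken on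
  sets of measure a, b, c, so that the L1 distance of g to the constant z is
  a |P - z| + b |Q - z| + c |R - z|.  If a sgn P + b sgn Q + c sgn R = 0, the origin is the
  weighted Fermat point: pairing each |P - z| with the unit vector sgn P by Cauchy-Schwarz
  shows that the distance is minimal at z = 0.  For n = 2, 4 the values are -1/2 and 1/2
  with equal weights, giving 2.  Otherwise they are the vertices of a unit equilateral
  triangle with weights alpha, beta, beta (n = alpha + 2 beta), placed so that the origin is
  its weighted Fermat point; the minimal distance is then
  (alpha sqrt 3 + sqrt (4 beta^2 - alpha^2)) / (2 n).  The splittings n = k + 2k,
  (k + 1) + 2k and k + 2 (k + 1), and thirds of [0, 1], turn its reciprocal into the
  formulas for Lambda_tilde. *)

lemma inner_sgn_self: "inner (sgn x) x = norm (x :: 'a :: real_inner)"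
  by (cases "x = 0") (simp_all add: sgn_div_norm power2_norm_eq_inner[symmetric] power2_eq_square)

lemma weighted_Fermat_point:
  fixes p :: "'i \<Rightarrow> 'a :: real_inner"
  assumes "\<And>i. i \<in> I \<Longrightarrow> 0 \<le> w i" and balanced: "(\<Sum>i\<in>I. w i *\<^sub>R sgn (p i)) = 0"
  shows "(\<Sum>i\<in>I. w i * norm (p i)) \<le> (\<Sum>i\<in>I. w i * norm (p i - z))"
proof -
  have "(\<Sum>i\<in>I. w i * norm (p i))
      = (\<Sum>i\<in>I. w i * inner (sgn (p i)) (p i - z)) + inner (\<Sum>i\<in>I. w i *\<^sub>R sgn (p i)) z"
    by (simp add: inner_sgn_self inner_sum_left algebra_simps sum_subtractf)
  also have "\<dots> = (\<Sum>i\<in>I. w i * inner (sgn (p i)) (p i - z))"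
    by (simp add: balanced)
  also have "\<dots> \<le> (\<Sum>i\<in>I. w i * norm (p i - z))"
  proof (intro sum_mono mult_left_mono assms)
    fix i
    have "inner (sgn (p i)) (p i - z) \<le> norm (sgn (p i)) * norm (p i - z)"
      by (rule norm_cauchy_schwarz)
    also have "\<dots> \<le> norm (p i - z)"
      by (simp add: norm_sgn mult_le_cancel_right1)
    finally show "inner (sgn (p i)) (p i - z) \<le> norm (p i - z)" .
  qed
  finally show ?thesis .
qed

lemma weighted_Fermat_point3:
  fixes P Q R :: "'a :: real_inner"
  assumes "0 \<le> a" "0 \<le> b" "0 \<le> c" "a *\<^sub>R sgn P + b *\<^sub>R sgn Q + c *\<^sub>R sgn R = 0"
  shows "a * norm P + b * norm Q + c * norm R \<le> a * norm (P - z) + b * norm (Q - z) + c * norm (R - z)"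
proof -
  have "(\<Sum>i<3. [a, b, c] ! i * norm ([P, Q, R] ! i)) \<le> (\<Sum>i<3. [a, b, c] ! i * norm ([P, Q, R] ! i - z))"
    by (rule weighted_Fermat_point) (use assms in \<open>auto simp: eval_nat_numeral less_Suc_eq ac_simps\<close>)
  then show ?thesis
    by (simp add: eval_nat_numeral ac_simps)
qed

lemma diameter_three_points:
  fixes P Q R :: "'a :: real_normed_vector"
  assumes "dist P Q = 1" "dist P R \<le> 1" "dist Q R \<le> 1"
  shows "diameter {P, Q, R} = 1"
proof (rule antisym)
  show "diameter {P, Q, R} \<le> 1"
    by (rule diameter_le) (use assms in \<open>auto simp: dist_norm norm_minus_commute\<close>)
  have "dist P Q \<le> diameter {P, Q, R}"
    by (rule diameter_bounded_bound) auto
  then show "1 \<le> diameter {P, Q, R}"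
    using assms by simp
qed

definition Lambda_witnessed :: "real measure \<Rightarrow> real \<Rightarrow> bool" where
  "Lambda_witnessed M \<Lambda> \<longleftrightarrow> (\<exists>g \<in> Linfty M. diameter (ess_range M g) = 1 \<and>
     \<Lambda> = (SUP z\<in>(UNIV::complex set). 1 / L1norm M (\<lambda>x. g x - z)))"

lemma ess_range_eq_finite_values:
  assumes g: "g \<in> borel_measurable M" and vals: "\<And>x. x \<in> space M \<Longrightarrow> g x \<in> S"
    and "finite S" "S \<noteq> {}"
    and pos: "\<And>s. s \<in> S \<Longrightarrow> emeasure M {x\<in>space M. g x = s} \<noteq> 0"
  shows "ess_range M g = S"
proof
  show "S \<subseteq> ess_range M g"
  proof
    fix s assume s: "s \<in> S"
    have "emeasure M {x\<in>space M. dist (g x) s < e} \<noteq> 0" if "e > 0" for e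
    proof
      assume null: "emeasure M {x\<in>space M. dist (g x) s < e} = 0"
      have "{x\<in>space M. dist (g x) s < e} \<in> sets M"
        using g by measurable
      moreover have "{x\<in>space M. g x = s} \<subseteq> {x\<in>space M. dist (g x) s < e}"
        using \<open>e > 0\<close> by auto
      ultimately have "emeasure M {x\<in>space M. g x = s} \<le> 0"
        using emeasure_mono null by metis
      then show False
        using pos[OF s] by simp
    qed
    then show "s \<in> ess_range M g"
      unfolding ess_range_def by auto
  qed
next
  show "ess_range M g \<subseteq> S"
  proof
    fix y assume y: "y \<in> ess_range M g"
    show "y \<in> S"
    proof (rule ccontr)
      assume "y \<notin> S"
      then have "infdist y S > 0"
        using \<open>finite S\<close> \<open>S \<noteq> {}\<close> finite_imp_closed infdist_pos_not_in_closed by blast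
      then have "emeasure M {x\<in>space M. dist (g x) y < infdist y S} \<noteq> 0"
        using y unfolding ess_range_def by blast
      moreover have "{x\<in>space M. dist (g x) y < infdist y S} = {}"
        using infdist_le[of "g _" S y] vals by (force simp: dist_commute)
      ultimately show False
        by simp
    qed
  qed
qed

lemma SUP_inverse_eq_inverse_min:
  fixes L :: "'a \<Rightarrow> real"
  assumes "\<And>z. L z\<^sub>0 \<le> L z" "0 < L z\<^sub>0"
  shows "(SUP z. 1 / L z) = 1 / L z\<^sub>0"
proof (rule cSup_eq_maximum)
  show "1 / L z\<^sub>0 \<in> range (\<lambda>z. 1 / L z)"
    by simp
  show "y \<le> 1 / L z\<^sub>0" if "y \<in> range (\<lambda>z. 1 / L z)" for y
    using that assms by (auto intro: frac_le)
qed

lemma Lambda_witnessedI: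
  assumes g: "g \<in> borel_measurable M" and vals: "\<And>x. x \<in> space M \<Longrightarrow> g x \<in> S"
    and "finite S" and pos: "\<And>s. s \<in> S \<Longrightarrow> emeasure M {x\<in>space M. g x = s} \<noteq> 0"
    and diam: "diameter S = 1"
    and min: "\<And>z. L1norm M g \<le> L1norm M (\<lambda>x. g x - z)" and "0 < L1norm M g"
  shows "Lambda_witnessed M (1 / L1norm M g)"
  unfolding Lambda_witnessed_def
proof (intro bexI conjI)
  have "S \<noteq> {}"
    using diam by auto
  then show "diameter (ess_range M g) = 1"
    using ess_range_eq_finite_values[OF g vals \<open>finite S\<close> _ pos] diam by simp
  show "1 / L1norm M g = (SUP z. 1 / L1norm M (\<lambda>x. g x - z))"
    using SUP_inverse_eq_inverse_min[where L = "\<lambda>z. L1norm M (\<lambda>x. g x - z)" and z\<^sub>0 = 0]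
      min \<open>0 < L1norm M g\<close> by simp
  obtain C where "\<forall>s\<in>S. cmod s \<le> C"
    using \<open>finite S\<close> finite_imp_bounded bounded_iff by blast
  then show "g \<in> Linfty M"
    unfolding Linfty_def using g vals by auto
qed

definition step3 :: "real \<Rightarrow> real \<Rightarrow> 'a \<Rightarrow> 'a \<Rightarrow> 'a \<Rightarrow> real \<Rightarrow> 'a" where
  "step3 s t P Q R x = (if x \<le> s then P else if x \<le> t then Q else R)"

lemma sum_step3_atLeastAtMost:
  fixes f :: "'a \<Rightarrow> real" and \<alpha> \<beta> \<gamma> :: nat
  shows "(\<Sum>i=1..\<alpha>+\<beta>+\<gamma>. f (step3 \<alpha> (\<alpha>+\<beta>) P Q R (real i))) = \<alpha> * f P + \<beta> * f Q + \<gamma> * f R"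
proof -
  have "{1..\<alpha>+\<beta>+\<gamma>} \<inter> {i. i \<le> \<alpha>} = {1..\<alpha>}"
    and "{1..\<alpha>+\<beta>+\<gamma>} \<inter> - {i. i \<le> \<alpha>} \<inter> {i. i \<le> \<alpha>+\<beta>} = {\<alpha>+1..\<alpha>+\<beta>}"
    and "{1..\<alpha>+\<beta>+\<gamma>} \<inter> - {i. i \<le> \<alpha>} \<inter> - {i. i \<le> \<alpha>+\<beta>} = {\<alpha>+\<beta>+1..\<alpha>+\<beta>+\<gamma>}"
    by auto
  moreover have "f (step3 \<alpha> (\<alpha>+\<beta>) P Q R (real i))
      = (if i \<le> \<alpha> then f P else if i \<le> \<alpha>+\<beta> then f Q else f R)" for i
    by (simp add: step3_def del: of_nat_add)
  ultimately show ?thesis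
    by (simp add: sum.If_cases del: of_nat_add)
qed

lemma integral_step3_uniform:
  fixes f :: "'a \<Rightarrow> real" and \<alpha> \<beta> \<gamma> :: nat
  assumes "m = \<alpha> + \<beta> + \<gamma>"
  shows "(\<integral>x. f (step3 \<alpha> (\<alpha>+\<beta>) P Q R x) \<partial>Omega_mu (enat m)) = (\<alpha> * f P + \<beta> * f Q + \<gamma> * f R) / m"
proof -
  have "inj_on real {1..m}"
    by (simp add: inj_on_def)
  then have "(\<integral>x. f (step3 \<alpha> (\<alpha>+\<beta>) P Q R x) \<partial>Omega_mu (enat m))
      = (\<Sum>i=1..m. f (step3 \<alpha> (\<alpha>+\<beta>) P Q R (real i))) / m"
    by (simp add: Omega_mu_def integral_uniform_count_measure sum.reindex card_image del: of_nat_add)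
  then show ?thesis
    unfolding assms sum_step3_atLeastAtMost .
qed

lemma emeasure_uniform_count_measure_nonzero:
  assumes "finite A" "X \<subseteq> A" "x \<in> X"
  shows "emeasure (uniform_count_measure A) X \<noteq> 0"
proof -
  have "card X \<noteq> 0" "card A \<noteq> 0"
    using assms finite_subset card_0_eq by blast+
  then have "0 < real (card X) / real (card A)"
    by simp
  then show ?thesis
    using assms by (simp add: emeasure_uniform_count_measure ennreal_eq_0_iff)
qed

lemma Lambda_witnessed_uniform_step3:
  fixes P Q R :: complex and \<alpha> \<beta> \<gamma> :: nat
  assumes m: "m = \<alpha> + \<beta> + \<gamma>" and "1 \<le> \<alpha>" "1 \<le> \<beta>" "1 \<le> \<gamma> \<or> R = Q" "P \<noteq> 0"
    and diam: "diameter {P, Q, R} = 1"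
    and balanced: "\<alpha> *\<^sub>R sgn P + \<beta> *\<^sub>R sgn Q + \<gamma> *\<^sub>R sgn R = 0"
  shows "Lambda_witnessed (Omega_mu (enat m)) (m / (\<alpha> * norm P + \<beta> * norm Q + \<gamma> * norm R))"
proof -
  define A where "A = real ` {1..m}"
  define g where "g = step3 \<alpha> (\<alpha>+\<beta>) P Q R"
  have M: "Omega_mu (enat m) = uniform_count_measure A"
    by (simp add: Omega_mu_def A_def)
  have L1: "L1norm (Omega_mu (enat m)) (\<lambda>x. g x - z)
      = (\<alpha> * norm (P - z) + \<beta> * norm (Q - z) + \<gamma> * norm (R - z)) / m" for z
    using integral_step3_uniform[OF m, of "\<lambda>w. norm (w - z)"] by (simp add: L1norm_def g_def)
  have "0 < m"
    using m \<open>1 \<le> \<alpha>\<close> by simp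
  have level_nonzero: "emeasure (Omega_mu (enat m)) {x \<in> space (Omega_mu (enat m)). g x = v} \<noteq> 0"
    if v: "v \<in> {P, Q, R}" for v
  proof -
    have "g 1 = P" "g (\<alpha> + 1) = Q" "1 \<le> \<gamma> \<Longrightarrow> g m = R"
      using \<open>1 \<le> \<alpha>\<close> \<open>1 \<le> \<beta>\<close> m by (simp_all add: g_def step3_def)
    moreover have "1 \<in> {1..m}" "\<alpha> + 1 \<in> {1..m}" "m \<in> {1..m}"
      using \<open>1 \<le> \<alpha>\<close> \<open>1 \<le> \<beta>\<close> m by auto
    then have "real 1 \<in> A" "real (\<alpha> + 1) \<in> A" "real m \<in> A"
      unfolding A_def by blast+
    ultimately obtain x where "x \<in> A" "g x = v"
      using v \<open>1 \<le> \<gamma> \<or> R = Q\<close> by (metis of_nat_1 insertE empty_iff)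
    then show ?thesis
      unfolding M
      by (intro emeasure_uniform_count_measure_nonzero[of _ _ x])
        (auto simp: A_def space_uniform_count_measure)
  qed
  have "Lambda_witnessed (Omega_mu (enat m)) (1 / L1norm (Omega_mu (enat m)) g)"
  proof (rule Lambda_witnessedI[OF _ _ _ level_nonzero diam])
    show "g \<in> borel_measurable (Omega_mu (enat m))"
      by (simp add: M measurable_def space_uniform_count_measure sets_uniform_count_measure)
    show "g x \<in> {P, Q, R}" for x
      by (simp add: g_def step3_def)
    show "L1norm (Omega_mu (enat m)) g \<le> L1norm (Omega_mu (enat m)) (\<lambda>x. g x - z)" for z
      using L1[of 0] L1[of z] \<open>0 < m\<close> weighted_Fermat_point3[OF _ _ _ balanced, of z]
      by (simp add: divide_right_mono)
    show "0 < L1norm (Omega_mu (enat m)) g"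
      using L1[of 0] \<open>0 < m\<close> \<open>1 \<le> \<alpha>\<close> \<open>P \<noteq> 0\<close>
      by (simp add: add_pos_nonneg)
  qed simp_all
  then show ?thesis
    using L1[of 0] by simp
qed

lemma step3_measurable: "step3 s t P Q R \<in> borel_measurable borel"
  unfolding step3_def by measurable

lemma integral_step3_unit_interval:
  fixes f :: "'a \<Rightarrow> real"
  assumes "0 \<le> s" "s \<le> t" "t \<le> 1"
  shows "(\<integral>x. f (step3 s t P Q R x) \<partial>Omega_mu \<infinity>) = s * f P + (t - s) * f Q + (1 - t) * f R"
proof -
  have "(\<lambda>x. indicator {0..1} x *\<^sub>R f (step3 s t P Q R x)) =
      (\<lambda>x. f P * indicator {0..s} x + f Q * indicator {s<..t} x + f R * indicator {t<..1} x)"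
    using assms by (auto simp: step3_def indicator_def fun_eq_iff)
  moreover have "integrable lborel (\<lambda>x. c * indicator I x :: real)"
    if "I \<in> {{0..s}, {s<..t}, {t<..1}}" for c I
    using that assms by auto
  ultimately show ?thesis
    using assms by (simp add: Omega_mu_def integral_restrict_space)
qed

lemma Lambda_witnessed_unit_interval_step3:
  fixes P Q R :: complex
  assumes "0 < s" "s < t" "t < 1" "P \<noteq> 0"
    and diam: "diameter {P, Q, R} = 1"
    and balanced: "s *\<^sub>R sgn P + (t - s) *\<^sub>R sgn Q + (1 - t) *\<^sub>R sgn R = 0"
  shows "Lambda_witnessed (Omega_mu \<infinity>) (1 / (s * norm P + (t - s) * norm Q + (1 - t) * norm R))"
proof -
  define M where "M = Omega_mu \<infinity>"
  define g where "g = step3 s t P Q R"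
  have L1: "L1norm M (\<lambda>x. g x - z) = s * norm (P - z) + (t - s) * norm (Q - z) + (1 - t) * norm (R - z)" for z
    using integral_step3_unit_interval[of s t "\<lambda>w. norm (w - z)"] assms
    by (simp add: L1norm_def g_def M_def)
  have M: "M = restrict_space lborel {0..1}"
    by (simp add: M_def Omega_mu_def)
  have meas: "g \<in> borel_measurable M"
    unfolding M g_def by (simp add: measurable_restrict_space1 step3_measurable)
  have restr: "emeasure M I = emeasure lborel I" if "I \<subseteq> {0..1}" for I
    using that by (simp add: M emeasure_restrict_space)
  have level_nonzero: "emeasure M {x \<in> space M. g x = v} \<noteq> 0" if v: "v \<in> {P, Q, R}" for v
  proof -
    have "{0..s} \<subseteq> {0..1}" "{s<..t} \<subseteq> {0..1}" "{t<..1} \<subseteq> {0..1}"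
      using assms by auto
    then have "emeasure M {0..s} = s" "emeasure M {s<..t} = t - s" "emeasure M {t<..1} = 1 - t"
      using assms by (simp_all add: restr)
    moreover have "{0..s} \<subseteq> {x \<in> space M. g x = P}" "{s<..t} \<subseteq> {x \<in> space M. g x = Q}"
      "{t<..1} \<subseteq> {x \<in> space M. g x = R}"
      using assms by (auto simp: M g_def step3_def)
    ultimately obtain I where "I \<subseteq> {x \<in> space M. g x = v}" "emeasure M I \<noteq> 0"
      using v assms by (auto simp: ennreal_eq_0_iff)
    moreover have "{x \<in> space M. g x = v} \<in> sets M"
      using meas by measurable
    ultimately show ?thesis
      by (metis emeasure_mono le_zero_eq)
  qed
  have "Lambda_witnessed M (1 / L1norm M g)"
  proof (rule Lambda_witnessedI[OF meas _ _ level_nonzero diam])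
    show "g x \<in> {P, Q, R}" for x
      by (simp add: g_def step3_def)
    show "L1norm M g \<le> L1norm M (\<lambda>x. g x - z)" for z
      using L1[of 0] L1[of z] assms weighted_Fermat_point3[OF _ _ _ balanced, of z] by simp
    show "0 < L1norm M g"
      using L1[of 0] assms by (simp add: add_pos_nonneg)
  qed simp
  then show ?thesis
    using L1[of 0] by (simp add: M_def)
qed

(* The unit equilateral triangle with horizontal base BC, moved down by fermat_shift a b
  so that the origin sees BC under the angle that balances the weights a, b, b:
  b sgn B + b sgn C = - a sgn A. *)
definition fermat_shift :: "real \<Rightarrow> real \<Rightarrow> real" where
  "fermat_shift a b = a / (2 * sqrt (4 * b\<^sup>2 - a\<^sup>2))"

definition triangle_A :: "real \<Rightarrow> real \<Rightarrow> complex" where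
  "triangle_A a b = Complex 0 (sqrt 3 / 2 - fermat_shift a b)"

definition triangle_B :: "real \<Rightarrow> real \<Rightarrow> complex" where
  "triangle_B a b = Complex (- 1 / 2) (- fermat_shift a b)"

definition triangle_C :: "real \<Rightarrow> real \<Rightarrow> complex" where
  "triangle_C a b = Complex (1 / 2) (- fermat_shift a b)"

lemma diameter_triangle: "diameter {triangle_A a b, triangle_B a b, triangle_C a b} = 1"
proof (rule diameter_three_points)
  have "sqrt 3 * sqrt 3 = 3" by simp
  then show "dist (triangle_A a b) (triangle_B a b) = 1" "dist (triangle_A a b) (triangle_C a b) \<le> 1"
    "dist (triangle_B a b) (triangle_C a b) \<le> 1"
    by (simp_all add: triangle_A_def triangle_B_def triangle_C_def dist_norm cmod_def power2_eq_square)
qed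

lemma sqrt_four_sq_diff_obtain:
  fixes a b :: real
  assumes "0 < b" "a\<^sup>2 < 3 * b\<^sup>2"
  obtains q where "0 < q" "q\<^sup>2 = 4 * b\<^sup>2 - a\<^sup>2" "sqrt (4 * b\<^sup>2 - a\<^sup>2) = q"
proof
  have "a\<^sup>2 < 4 * b\<^sup>2"
    using assms by (smt (verit) zero_less_power)
  then show "0 < sqrt (4 * b\<^sup>2 - a\<^sup>2)" "(sqrt (4 * b\<^sup>2 - a\<^sup>2))\<^sup>2 = 4 * b\<^sup>2 - a\<^sup>2"
    by simp_all
qed simp

lemma fermat_shift_less:
  assumes "0 < a" "0 < b" "a\<^sup>2 < 3 * b\<^sup>2"
  shows "fermat_shift a b < sqrt 3 / 2"
proof -
  obtain q where q: "0 < q" "q\<^sup>2 = 4 * b\<^sup>2 - a\<^sup>2" "sqrt (4 * b\<^sup>2 - a\<^sup>2) = q"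
    using sqrt_four_sq_diff_obtain assms(2,3) .
  have "(2 * fermat_shift a b)\<^sup>2 = a\<^sup>2 / q\<^sup>2"
    by (simp add: fermat_shift_def q(3) power_divide)
  also have "\<dots> < 3"
  proof -
    have "a\<^sup>2 < 3 * q\<^sup>2"
      using q(2) assms(3) by linarith
    then show ?thesis
      using q(1) by (simp add: divide_less_eq)
  qed
  finally show ?thesis
    using real_less_rsqrt by fastforce
qed

lemma
  assumes "0 < a" "0 < b" "a\<^sup>2 < 3 * b\<^sup>2"
  shows norm_triangle_A: "norm (triangle_A a b) = sqrt 3 / 2 - fermat_shift a b"
    and norm_triangle_B: "norm (triangle_B a b) = b / sqrt (4 * b\<^sup>2 - a\<^sup>2)"
    and norm_triangle_C: "norm (triangle_C a b) = b / sqrt (4 * b\<^sup>2 - a\<^sup>2)"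
proof -
  obtain q where q: "0 < q" "q\<^sup>2 = 4 * b\<^sup>2 - a\<^sup>2" "sqrt (4 * b\<^sup>2 - a\<^sup>2) = q"
    using sqrt_four_sq_diff_obtain assms(2,3) .
  show "norm (triangle_A a b) = sqrt 3 / 2 - fermat_shift a b"
    using fermat_shift_less[OF assms] by (simp add: triangle_A_def cmod_def)
  have "(1 / 2)\<^sup>2 + (a / (2 * q))\<^sup>2 = (q\<^sup>2 + a\<^sup>2) / (2 * q)\<^sup>2"
    using q(1) by (simp add: field_simps)
  also have "\<dots> = (b / q)\<^sup>2"
  proof -
    have "q\<^sup>2 + a\<^sup>2 = 4 * b\<^sup>2"
      using q(2) by simp
    then show ?thesis
      unfolding power_divide power_mult_distrib by simp
  qed
  finally have "sqrt ((1 / 2)\<^sup>2 + (fermat_shift a b)\<^sup>2) = b / q"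
    using assms(2) q(1) by (simp add: fermat_shift_def q(3))
  then show "norm (triangle_B a b) = b / sqrt (4 * b\<^sup>2 - a\<^sup>2)" "norm (triangle_C a b) = b / sqrt (4 * b\<^sup>2 - a\<^sup>2)"
    by (simp_all add: triangle_B_def triangle_C_def cmod_def q(3))
qed

lemma triangle_sgn_balanced:
  assumes "0 < a" "0 < b" "a\<^sup>2 < 3 * b\<^sup>2"
  shows "a *\<^sub>R sgn (triangle_A a b) + b *\<^sub>R sgn (triangle_B a b) + b *\<^sub>R sgn (triangle_C a b) = 0"
proof -
  obtain q where q: "0 < q" "q\<^sup>2 = 4 * b\<^sup>2 - a\<^sup>2" "sqrt (4 * b\<^sup>2 - a\<^sup>2) = q"
    using sqrt_four_sq_diff_obtain assms(2,3) .
  have "0 < sqrt 3 / 2 - fermat_shift a b"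
    using fermat_shift_less[OF assms] by simp
  then have "a *\<^sub>R sgn (triangle_A a b) = Complex 0 a"
    by (simp add: sgn_div_norm triangle_A_def scaleR_complex.ctr cmod_def)
  moreover have "b *\<^sub>R sgn (triangle_B a b) + b *\<^sub>R sgn (triangle_C a b) = q *\<^sub>R (triangle_B a b + triangle_C a b)"
    using assms q(1) by (simp add: sgn_div_norm norm_triangle_B norm_triangle_C q(3) scaleR_add_right)
  moreover have "q *\<^sub>R (triangle_B a b + triangle_C a b) = Complex 0 (- a)"
    using q(1) by (simp add: triangle_B_def triangle_C_def fermat_shift_def q(3) scaleR_complex.ctr)
  ultimately show ?thesis
    by (simp add: add.assoc complex_eq_iff)
qed

(* The minimal weighted distance a |A - z| + b |B - z| + b |C - z|, attained at z = 0. *)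
definition fermat_value :: "real \<Rightarrow> real \<Rightarrow> real" where
  "fermat_value a b = (a * sqrt 3 + sqrt (4 * b\<^sup>2 - a\<^sup>2)) / 2"

lemma fermat_value_diag: "0 \<le> a \<Longrightarrow> fermat_value a a = sqrt 3 * a"
  by (simp add: fermat_value_def real_sqrt_mult)

lemma fermat_value_pos: "0 < a \<Longrightarrow> a\<^sup>2 \<le> 4 * b\<^sup>2 \<Longrightarrow> 0 < fermat_value a b"
  by (simp add: fermat_value_def add_pos_nonneg)

lemma triangle_weighted_norm_sum:
  assumes "0 < a" "0 < b" "a\<^sup>2 < 3 * b\<^sup>2"
  shows "a * norm (triangle_A a b) + b * norm (triangle_B a b) + b * norm (triangle_C a b) = fermat_value a b"
proof -
  obtain q where q: "0 < q" "q\<^sup>2 = 4 * b\<^sup>2 - a\<^sup>2" "sqrt (4 * b\<^sup>2 - a\<^sup>2) = q"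
    using sqrt_four_sq_diff_obtain assms(2,3) .
  have "a * (sqrt 3 / 2 - a / (2 * q)) + b * (b / q) + b * (b / q) = (a * sqrt 3 + (4 * b\<^sup>2 - a\<^sup>2) / q) / 2"
    using q(1) by (simp add: field_simps power2_eq_square)
  also have "\<dots> = (a * sqrt 3 + q) / 2"
    unfolding q(2)[symmetric] using q(1) by (simp add: power2_eq_square)
  finally show ?thesis
    by (simp add: norm_triangle_A[OF assms] norm_triangle_B[OF assms] norm_triangle_C[OF assms]
        fermat_shift_def fermat_value_def q(3))
qed

lemma Lambda_witnessed_uniform_triangle:
  fixes \<alpha> \<beta> :: nat
  assumes m: "m = \<alpha> + 2 * \<beta>" and "0 < \<alpha>" "\<alpha>\<^sup>2 < 3 * \<beta>\<^sup>2"
  shows "Lambda_witnessed (Omega_mu (enat m)) (m / fermat_value \<alpha> \<beta>)"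
proof -
  let ?A = "triangle_A \<alpha> \<beta>" and ?B = "triangle_B \<alpha> \<beta>" and ?C = "triangle_C \<alpha> \<beta>"
  have "0 < \<beta>"
    using assms by (cases \<beta>) auto
  then have ab: "0 < real \<alpha>" "0 < real \<beta>" "(real \<alpha>)\<^sup>2 < 3 * (real \<beta>)\<^sup>2"
    using assms by (simp_all flip: of_nat_power)
  have "Lambda_witnessed (Omega_mu (enat m)) (m / (\<alpha> * norm ?A + \<beta> * norm ?B + \<beta> * norm ?C))"
  proof (rule Lambda_witnessed_uniform_step3)
    show "m = \<alpha> + \<beta> + \<beta>" "1 \<le> \<alpha>" "1 \<le> \<beta>" "1 \<le> \<beta> \<or> ?C = ?B"
      using m \<open>0 < \<alpha>\<close> \<open>0 < \<beta>\<close> by auto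
    show "?A \<noteq> 0"
      using fermat_shift_less[OF ab] by (simp add: triangle_A_def complex_eq_iff)
    show "diameter {?A, ?B, ?C} = 1"
      by (rule diameter_triangle)
    show "real \<alpha> *\<^sub>R sgn ?A + real \<beta> *\<^sub>R sgn ?B + real \<beta> *\<^sub>R sgn ?C = 0"
      by (rule triangle_sgn_balanced[OF ab])
  qed
  then show ?thesis
    unfolding triangle_weighted_norm_sum[OF ab] .
qed

lemma Lambda_witnessed_unit_interval_triangle:
  assumes "0 < a" "0 < b" "a\<^sup>2 < 3 * b\<^sup>2" "a + 2 * b = 1"
  shows "Lambda_witnessed (Omega_mu \<infinity>) (1 / fermat_value a b)"
proof -
  let ?A = "triangle_A a b" and ?B = "triangle_B a b" and ?C = "triangle_C a b"
  have weights: "a + b - a = b" "1 - (a + b) = b"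
    using assms(4) by simp_all
  have "Lambda_witnessed (Omega_mu \<infinity>)
      (1 / (a * norm ?A + (a + b - a) * norm ?B + (1 - (a + b)) * norm ?C))"
  proof (rule Lambda_witnessed_unit_interval_step3)
    show "?A \<noteq> 0"
      using fermat_shift_less[OF assms(1-3)] by (simp add: triangle_A_def complex_eq_iff)
    show "diameter {?A, ?B, ?C} = 1"
      by (rule diameter_triangle)
    show "a *\<^sub>R sgn ?A + (a + b - a) *\<^sub>R sgn ?B + (1 - (a + b)) *\<^sub>R sgn ?C = 0"
      unfolding weights by (rule triangle_sgn_balanced[OF assms(1-3)])
  qed (use assms in simp_all)
  then show ?thesis
    unfolding weights triangle_weighted_norm_sum[OF assms(1-3)] .
qed

lemma Lambda_witnessed_uniform_segment:
  assumes "0 < k"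
  shows "Lambda_witnessed (Omega_mu (enat (2 * k))) 2"
proof -
  have "Lambda_witnessed (Omega_mu (enat (2 * k)))
      (real (2 * k) / (k * norm (- 1 / 2 :: complex) + k * norm (1 / 2 :: complex)
        + real (0::nat) * norm (1 / 2 :: complex)))"
  proof (rule Lambda_witnessed_uniform_step3)
    show "diameter {- 1 / 2, 1 / 2, 1 / 2 :: complex} = 1"
      by (rule diameter_three_points) (simp_all add: dist_norm)
  qed (use assms in \<open>simp_all add: sgn_div_norm\<close>)
  then show ?thesis
    using assms by simp
qed

lemma two_sqrt3_divide_eq_fermat_value:
  fixes a b u n :: real
  assumes "0 < n" "0 < a" "a\<^sup>2 \<le> 4 * b\<^sup>2" "3 * (4 * b\<^sup>2 - a\<^sup>2) = u * n"
  shows "2 * sqrt 3 / (sqrt (u / n) + 3 * a / n) = n / fermat_value a b"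
proof -
  define D where "D = 4 * b\<^sup>2 - a\<^sup>2"
  have "u = 3 * D / n"
    using assms by (simp add: D_def field_simps)
  then have "sqrt (u / n) = sqrt (3 * D / n\<^sup>2)"
    by (intro arg_cong[where f = sqrt]) (simp add: power2_eq_square)
  also have "\<dots> = sqrt 3 * sqrt D / n"
    using assms(1) by (simp add: real_sqrt_divide real_sqrt_mult)
  finally have "sqrt (u / n) + 3 * a / n = sqrt 3 * (2 * fermat_value a b) / n"
    using assms(1) by (simp add: fermat_value_def D_def field_simps)
  moreover have "2 * r / (r * (2 * X) / n) = n / X" if "0 < r" "0 < X" for r X
    using that assms(1) by (simp add: field_simps)
  ultimately show ?thesis
    using fermat_value_pos assms(2,3) by simp
qed

lemma Lambda_tilde_infinity: "Lambda_tilde \<infinity> = 1 / fermat_value (1 / 3) (1 / 3)"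
proof -
  have "sqrt 3 = 3 / sqrt 3"
    by (simp add: field_simps)
  then show ?thesis
    by (simp add: Lambda_tilde_def fermat_value_diag)
qed

lemma Lambda_tilde_three_mul:
  fixes m k :: nat
  assumes "m = 3 * k" "0 < k"
  shows "Lambda_tilde (enat m) = m / fermat_value k k"
proof -
  have "m mod 3 = 0" "m \<noteq> 2" "m \<noteq> 4"
    using assms by presburger+
  moreover have "sqrt 3 = 3 / sqrt 3"
    by (simp add: field_simps)
  ultimately show ?thesis
    using assms by (simp add: Lambda_tilde_def fermat_value_diag)
qed

lemma Lambda_tilde_three_mul_plus_one:
  fixes m k :: nat
  assumes m: "m = 3 * k + 1" and "2 \<le> k"
  shows "Lambda_tilde (enat m) = m / fermat_value (k + 1) k"
proof -
  have "m mod 3 = 1" "(m - 1) div 3 = k" "m \<noteq> 2" "m \<noteq> 4"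
    using assms by auto
  have "real k + 1 \<le> 2 * real k"
    using \<open>2 \<le> k\<close> by simp
  then have "(real k + 1)\<^sup>2 \<le> 4 * (real k)\<^sup>2"
    using power_mono[of "real k + 1" "2 * real k" 2] by (simp add: power_mult_distrib)
  then have "2 * sqrt 3 / (sqrt ((3 * real k - 3) / m) + 3 * real (k + 1) / m) = m / fermat_value (k + 1) k"
    using m by (intro two_sqrt3_divide_eq_fermat_value) (simp_all add: power2_eq_square algebra_simps)
  then show ?thesis
    using \<open>m mod 3 = 1\<close> \<open>(m - 1) div 3 = k\<close> \<open>m \<noteq> 2\<close> \<open>m \<noteq> 4\<close> m
    by (simp add: Lambda_tilde_def Let_def algebra_simps)
qed

lemma Lambda_tilde_three_mul_plus_two:
  fixes m k :: nat
  assumes m: "m = 3 * k + 2" and "1 \<le> k"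
  shows "Lambda_tilde (enat m) = m / fermat_value k (k + 1)"
proof -
  have "m mod 3 = 2" "(m - 2) div 3 = k" "m \<noteq> 2" "m \<noteq> 4"
    using assms by presburger+
  have "(real k)\<^sup>2 \<le> 4 * (real k + 1)\<^sup>2"
    by (simp add: power2_eq_square algebra_simps)
  then have "2 * sqrt 3 / (sqrt ((3 * real k + 6) / m) + 3 * real k / m) = m / fermat_value k (k + 1)"
    using m \<open>1 \<le> k\<close> by (intro two_sqrt3_divide_eq_fermat_value) (simp_all add: power2_eq_square algebra_simps)
  then show ?thesis
    using \<open>m mod 3 = 2\<close> \<open>(m - 2) div 3 = k\<close> \<open>m \<noteq> 2\<close> \<open>m \<noteq> 4\<close> m
    by (simp add: Lambda_tilde_def Let_def algebra_simps)
qed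

lemma Lambda_witnessed_uniform_Lambda_tilde:
  assumes "1 < m"
  shows "Lambda_witnessed (Omega_mu (enat m)) (Lambda_tilde (enat m))"
proof -
  define k where "k = m div 3"
  consider "m = 2 \<or> m = 4" | "m = 3 * k" | "m = 3 * k + 1" "m \<noteq> 4" | "m = 3 * k + 2" "m \<noteq> 2"
    unfolding k_def by linarith
  then show ?thesis
  proof cases
    case 1
    then show ?thesis
      using Lambda_witnessed_uniform_segment[of 1] Lambda_witnessed_uniform_segment[of 2]
      by (auto simp: Lambda_tilde_def)
  next
    case 2
    then have "0 < k"
      using assms by simp
    then show ?thesis
      using Lambda_witnessed_uniform_triangle[of m k k] Lambda_tilde_three_mul[OF 2] 2
      by (simp add: power2_eq_square)
  next
    case 3
    then have "2 \<le> k"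
      using assms by simp
    then have "2 * k \<le> k * k"
      by (rule mult_le_mono1)
    then have "Suc (k + k) < 2 * (k * k)"
      using \<open>2 \<le> k\<close> by linarith
    then have "(k + 1)\<^sup>2 < 3 * k\<^sup>2"
      by (simp add: power2_eq_square)
    then show ?thesis
      using Lambda_witnessed_uniform_triangle[of m "k + 1" k] Lambda_tilde_three_mul_plus_one[OF 3(1) \<open>2 \<le> k\<close>] 3
      by simp
  next
    case 4
    then have "1 \<le> k"
      using assms by simp
    moreover have "k\<^sup>2 < 3 * (k + 1)\<^sup>2"
      by (simp add: power2_eq_square)
    ultimately show ?thesis
      using Lambda_witnessed_uniform_triangle[of m k "k + 1"] Lambda_tilde_three_mul_plus_two[OF 4(1)] 4
      by simp
  qed
qed

theorem lemmaA2:
  fixes n :: enat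
  assumes "1 < n"
  shows "\<exists>g \<in> Linfty (Omega_mu n).
           diameter (ess_range (Omega_mu n) g) = 1 \<and>
           Lambda_tilde n = (SUP z\<in>(UNIV::complex set). 1 / L1norm (Omega_mu n) (\<lambda>x. g x - z))"
proof -
  have "Lambda_witnessed (Omega_mu n) (Lambda_tilde n)"
  proof (cases n)
    case infinity
    then show ?thesis
      using Lambda_witnessed_unit_interval_triangle[of "1 / 3" "1 / 3"] Lambda_tilde_infinity
      by simp
  next
    case (enat m)
    then show ?thesis
      using Lambda_witnessed_uniform_Lambda_tilde assms by (simp add: one_enat_def)
  qed
  then show ?thesis
    unfolding Lambda_witnessed_def .
qed

end
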